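(* Every $A'$-group is a solvable $A$-group, i.e. a solvable finite group all of whose Sylow subgroups are abelian.
   Context: $A'$-groups are defined inductively: (1) finite abelian groups are $A'$-groups; (2) if $\mathcal G$ is an $A'$-group and $H$ is a finite abelian group of order prime to $|\mathcal G|$, then $H\rtimes_\mu\mathcal G$ is an $A'$-group for every action $\mu$ of $\mathcal G$ on $H$; (3) if $\mathcal G_1$ and $\mathcal G_2$ are $A'$-groups, then $\mathcal G_1\times\mathcal G_2$ is an $A'$-group. *)

theory Defs
  imports "HOL-Algebra.Algebra" "HOL-Computational_Algebra.Primes"
begin

definition semidirect_product ::
  "('a, 'c) monoid_scheme \<Rightarrow> ('b \<Rightarrow> 'a \<Rightarrow> 'a) \<Rightarrow> ('b, 'd) monoid_scheme \<Rightarrow> ('a \<times> 'b) monoid"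
  where "semidirect_product H mu K =
    \<lparr> carrier = carrier H \<times> carrier K,
      monoid.mult = (\<lambda>x y. (fst x \<otimes>\<^bsub>H\<^esub> mu (snd x) (fst y), snd x \<otimes>\<^bsub>K\<^esub> snd y)),
      monoid.one = (\<one>\<^bsub>H\<^esub>, \<one>\<^bsub>K\<^esub>) \<rparr>"

text \<open>Every finite group is
  isomorphic to one with carrier a subset of nat, so we generate the class on
  nat-carried groups and close it under isomorphism; A'-groups of arbitrary
  carrier type are then those isomorphic to a member.\<close>
inductive Aprime_nat :: "nat monoid \<Rightarrow> bool" where
  abelian: "\<lbrakk> comm_group G; finite (carrier G) \<rbrakk> \<Longrightarrow> Aprime_nat G"
| semidirect: "\<lbrakk> Aprime_nat K; comm_group (H :: nat monoid); finite (carrier H);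
     coprime (order H) (order K); mu \<in> hom K (AutoGroup H);
     S \<cong> semidirect_product H mu K \<rbrakk> \<Longrightarrow> Aprime_nat S"
| product: "\<lbrakk> Aprime_nat G1; Aprime_nat G2; S \<cong> G1 \<times>\<times> G2 \<rbrakk> \<Longrightarrow> Aprime_nat S"

definition Aprime_group :: "('a, 'b) monoid_scheme \<Rightarrow> bool" where
  "Aprime_group G \<longleftrightarrow> group G \<and> (\<exists>S. Aprime_nat S \<and> G \<cong> S)"

definition sylow_subgroup :: "('a, 'b) monoid_scheme \<Rightarrow> nat \<Rightarrow> 'a set \<Rightarrow> bool" where
  "sylow_subgroup G p P \<longleftrightarrow> Factorial_Ring.prime p \<and> subgroup P G \<and>
     card P = p ^ multiplicity p (order G)"

definition A_group :: "('a, 'b) monoid_scheme \<Rightarrow> bool" where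
  "A_group G \<longleftrightarrow> group G \<and> finite (carrier G) \<and>
     (\<forall>p P. sylow_subgroup G p P \<longrightarrow> comm_group (G\<lparr>carrier := P\<rparr>))"

end

theory Submission
  imports Defs
begin

text \<open>We prove the stronger statement that every subgroup of prime power order is abelian,
  since this passes to subgroups along injective homomorphisms. Finite abelian groups have
  both properties, and both survive isomorphisms and direct products (a p-subgroup of
  \<open>A \<times> B\<close> embeds into the product of its two projections, which are p-subgroups).
  A semidirect product \<open>H \<rtimes> K\<close> is an extension of the abelian normal subgroup \<open>H\<close> by \<open>K\<close>,
  so it is solvable. As \<open>|H|\<close> and \<open>|K|\<close> are coprime, a prime \<open>p\<close> fails to divide one of them:
  if \<open>p \<nmid> |K|\<close>, a p-subgroup projects trivially to \<open>K\<close> and lies in the abelian \<open>H\<close>; if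
  \<open>p \<nmid> |H|\<close>, it meets \<open>H\<close> trivially and embeds into \<open>K\<close>.\<close>

lemma comm_group_subgroupI:
  assumes "group G" "subgroup P G"
    and "\<And>x y. x \<in> P \<Longrightarrow> y \<in> P \<Longrightarrow> x \<otimes>\<^bsub>G\<^esub> y = y \<otimes>\<^bsub>G\<^esub> x"
  shows "comm_group (G\<lparr>carrier := P\<rparr>)"
  using group.subgroup_imp_group[OF assms(1,2)] by (rule group.group_comm_groupI) (use assms in auto)

lemma comm_group_subgroup_inj_hom:
  assumes "group A" "h \<in> hom A B" "subgroup P A" "inj_on h P"
    and "comm_group (B\<lparr>carrier := h ` P\<rparr>)"
  shows "comm_group (A\<lparr>carrier := P\<rparr>)"
proof (rule comm_group_subgroupI[OF assms(1,3)])
  fix x y assume xy: "x \<in> P" "y \<in> P"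
  then have carr: "x \<in> carrier A" "y \<in> carrier A" using subgroup.subset[OF assms(3)] by auto
  have "h (x \<otimes>\<^bsub>A\<^esub> y) = h x \<otimes>\<^bsub>B\<^esub> h y" using assms(2) carr by (simp add: hom_mult)
  also have "\<dots> = h y \<otimes>\<^bsub>B\<^esub> h x" using comm_groupE(4)[OF assms(5)] xy by auto
  also have "\<dots> = h (y \<otimes>\<^bsub>A\<^esub> x)" using assms(2) carr by (simp add: hom_mult)
  finally show "x \<otimes>\<^bsub>A\<^esub> y = y \<otimes>\<^bsub>A\<^esub> x"
    using assms(4) xy subgroup.m_closed[OF assms(3)] by (auto dest: inj_onD)
qed

lemma (in group) card_subgroup_dvd:
  assumes "subgroup A G" "subgroup B G" "A \<subseteq> B"
  shows "card A dvd card B"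
proof -
  have "group (G\<lparr>carrier := B\<rparr>)" using subgroup_imp_group assms(2) .
  moreover have "subgroup A (G\<lparr>carrier := B\<rparr>)" using subgroup_incl assms by blast
  ultimately have "card (rcosets\<^bsub>G\<lparr>carrier := B\<rparr>\<^esub> A) * card A = card B"
    using group.lagrange by (fastforce simp: order_def)
  then show ?thesis by (metis dvd_triv_right)
qed

lemma (in group) prime_power_subgroup_eq_one:
  assumes "subgroup Q G" "subgroup R G" "Q \<subseteq> R" "Factorial_Ring.prime p"
    and "card Q = p ^ k" "\<not> p dvd card R"
  shows "Q = {\<one>}"
proof -
  have "p ^ k dvd card R" using card_subgroup_dvd[OF assms(1-3)] assms(5) by simp
  then have "k = 0" using assms(6) by (metis dvd_power dvd_trans gr0I)
  then have "card Q = 1" using assms(5) by simp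
  then show ?thesis using subgroup.one_closed[OF assms(1)] by (metis card_1_singletonE singletonD)
qed

lemma (in group_hom) card_image_subgroup_dvd:
  assumes "subgroup I G"
  shows "card (h ` I) dvd card I"
proof -
  interpret I: group_hom "G\<lparr>carrier := I\<rparr>" "H\<lparr>carrier := h ` I\<rparr>" h
    using induced_group_hom[OF assms(1)] .
  let ?N = "kernel (G\<lparr>carrier := I\<rparr>) (H\<lparr>carrier := h ` I\<rparr>) h"
  have "G\<lparr>carrier := I\<rparr> Mod ?N \<cong> H\<lparr>carrier := h ` I\<rparr>"
    by (rule I.FactGroup_iso) simp
  then have "card (rcosets\<^bsub>G\<lparr>carrier := I\<rparr>\<^esub> ?N) = card (h ` I)"
    using iso_same_card by (fastforce simp: FactGroup_def)
  moreover have "card (rcosets\<^bsub>G\<lparr>carrier := I\<rparr>\<^esub> ?N) * card ?N = card I"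
    using I.G.lagrange[OF I.subgroup_kernel] by (simp add: order_def)
  ultimately show ?thesis by (metis dvd_triv_left)
qed

lemma (in group_hom) card_image_prime_power:
  assumes "subgroup P G" "Factorial_Ring.prime p" "card P = p ^ k"
  obtains j where "card (h ` P) = p ^ j"
  using card_image_subgroup_dvd[OF assms(1)] assms(2,3) divides_primepow_nat by metis

definition abelian_p_subgroups :: "('a, 'b) monoid_scheme \<Rightarrow> bool" where
  "abelian_p_subgroups G \<longleftrightarrow> (\<forall>p k P. Factorial_Ring.prime p \<longrightarrow> subgroup P G \<longrightarrow>
      card P = p ^ k \<longrightarrow> comm_group (G\<lparr>carrier := P\<rparr>))"

lemma abelian_p_subgroupsD:
  "\<lbrakk>abelian_p_subgroups G; Factorial_Ring.prime p; subgroup P G; card P = p ^ k\<rbrakk>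
    \<Longrightarrow> comm_group (G\<lparr>carrier := P\<rparr>)"
  unfolding abelian_p_subgroups_def by blast

lemma abelian_p_subgroups_inj_hom:
  assumes "group_hom A B h" "inj_on h (carrier A)" "abelian_p_subgroups B"
  shows "abelian_p_subgroups A"
  unfolding abelian_p_subgroups_def
proof (intro allI impI)
  interpret group_hom A B h by fact
  fix p k P assume p: "Factorial_Ring.prime p" and P: "subgroup P A" "card P = p ^ k"
  have inj: "inj_on h P" using assms(2) subgroup.subset[OF P(1)] inj_on_subset by blast
  have "comm_group (B\<lparr>carrier := h ` P\<rparr>)"
    using abelian_p_subgroupsD[OF assms(3) p subgroup_img_is_subgroup[OF P(1)]] card_image[OF inj] P(2)
    by simp
  then show "comm_group (A\<lparr>carrier := P\<rparr>)"
    using comm_group_subgroup_inj_hom[OF G.is_group homh P(1) inj] by blast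
qed

lemma (in comm_group) abelian_p_subgroups: "abelian_p_subgroups G"
  unfolding abelian_p_subgroups_def
  by (intro allI impI comm_group_subgroupI) (auto intro: m_comm dest: subgroup.mem_carrier)

lemma (in comm_group) solvable: "solvable G"
proof -
  have "(derived G ^^ 1) (carrier G) = {\<one>}" using derived_eq_singleton by simp
  then show ?thesis using solvable_iff_trivial_derived_seq by blast
qed

lemma solvable_DirProd:
  assumes "group A" "group B" "solvable A" "solvable B"
  shows "solvable (A \<times>\<times> B)"
proof (rule solvable_condition)
  show "group_hom A (A \<times>\<times> B) (\<lambda>a. (a, \<one>\<^bsub>B\<^esub>))"
    using assms DirProd_group by (auto simp: group_hom_def group_hom_axioms_def hom_def group.is_monoid)
  show "group_hom (A \<times>\<times> B) B snd"
    using assms DirProd_group by (auto simp: group_hom_def group_hom_axioms_def hom_def mult_DirProd')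
  show "snd ` carrier (A \<times>\<times> B) = carrier B"
    using group.is_monoid[OF assms(1)] monoid.one_closed by force
  show "kernel (A \<times>\<times> B) B snd \<subseteq> (\<lambda>a. (a, \<one>\<^bsub>B\<^esub>)) ` carrier A"
    by (auto simp: kernel_def)
qed fact+

lemma abelian_p_subgroups_DirProd:
  assumes "group A" "group B" "abelian_p_subgroups A" "abelian_p_subgroups B"
  shows "abelian_p_subgroups (A \<times>\<times> B)"
  unfolding abelian_p_subgroups_def
proof (intro allI impI)
  have gD: "group (A \<times>\<times> B)" using DirProd_group assms(1,2) .
  have fst: "group_hom (A \<times>\<times> B) A fst" and snd: "group_hom (A \<times>\<times> B) B snd"
    using assms gD by (auto simp: group_hom_def group_hom_axioms_def hom_def mult_DirProd')
  fix p k P assume p: "Factorial_Ring.prime p" and P: "subgroup P (A \<times>\<times> B)" "card P = p ^ k"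
  obtain i j where "card (fst ` P) = p ^ i" "card (snd ` P) = p ^ j"
    using group_hom.card_image_prime_power[OF fst P(1) p P(2)]
      group_hom.card_image_prime_power[OF snd P(1) p P(2)] by metis
  then have A: "comm_group (A\<lparr>carrier := fst ` P\<rparr>)" and B: "comm_group (B\<lparr>carrier := snd ` P\<rparr>)"
    using abelian_p_subgroupsD[OF assms(3) p group_hom.subgroup_img_is_subgroup[OF fst P(1)]]
      abelian_p_subgroupsD[OF assms(4) p group_hom.subgroup_img_is_subgroup[OF snd P(1)]] by auto
  have "fst x \<otimes>\<^bsub>A\<^esub> fst y = fst y \<otimes>\<^bsub>A\<^esub> fst x \<and> snd x \<otimes>\<^bsub>B\<^esub> snd y = snd y \<otimes>\<^bsub>B\<^esub> snd x"
    if "x \<in> P" "y \<in> P" for x y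
    using that comm_groupE(4)[OF A, of "fst x" "fst y"] comm_groupE(4)[OF B, of "snd x" "snd y"] by auto
  then show "comm_group ((A \<times>\<times> B)\<lparr>carrier := P\<rparr>)"
    by (intro comm_group_subgroupI[OF gD P(1)]) (simp add: mult_DirProd')
qed

lemma abelian_p_subgroups_coprime_extension:
  assumes g: "group_hom G K g" and surj: "g ` carrier G = carrier K"
    and N: "comm_group (G\<lparr>carrier := kernel G K g\<rparr>)"
    and cop: "coprime (card (kernel G K g)) (order K)" and K: "abelian_p_subgroups K"
  shows "abelian_p_subgroups G"
  unfolding abelian_p_subgroups_def
proof (intro allI impI)
  interpret group_hom G K g by fact
  let ?N = "kernel G K g"
  fix p k P assume p: "Factorial_Ring.prime p" and P: "subgroup P G" "card P = p ^ k"
  have "\<not> p dvd order K \<or> \<not> p dvd card ?N"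
    using cop p by (metis coprime_common_divisor not_prime_unit)
  then show "comm_group (G\<lparr>carrier := P\<rparr>)"
  proof
    assume npK: "\<not> p dvd order K"
    obtain j where "card (g ` P) = p ^ j" using card_image_prime_power[OF P(1) p P(2)] .
    then have "g ` P = {\<one>\<^bsub>K\<^esub>}"
      using H.prime_power_subgroup_eq_one[OF subgroup_img_is_subgroup[OF P(1)] H.subgroup_self _ p]
        npK subgroup_img_is_subgroup[OF P(1)] by (auto simp: order_def dest: subgroup.subset)
    then have "P \<subseteq> ?N" using subgroup.subset[OF P(1)] by (auto simp: kernel_def)
    then show ?thesis
      using comm_groupE(4)[OF N] by (intro comm_group_subgroupI[OF G.is_group P(1)]) auto
  next
    assume npN: "\<not> p dvd card ?N"
    have sPN: "subgroup (P \<inter> ?N) G" using G.subgroups_Inter_pair[OF P(1) subgroup_kernel] .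
    have "card (P \<inter> ?N) dvd p ^ k"
      using G.card_subgroup_dvd[OF sPN P(1)] P(2) by simp
    then obtain i where "card (P \<inter> ?N) = p ^ i" using p divides_primepow_nat by metis
    then have PN: "P \<inter> ?N = {\<one>\<^bsub>G\<^esub>}"
      using G.prime_power_subgroup_eq_one[OF sPN subgroup_kernel _ p _ npN] by blast
    have inj: "inj_on g P"
    proof (rule inj_onI)
      fix x y assume xy: "x \<in> P" "y \<in> P" "g x = g y"
      then have carr: "x \<in> carrier G" "y \<in> carrier G" using subgroup.subset[OF P(1)] by auto
      have "x \<otimes>\<^bsub>G\<^esub> inv\<^bsub>G\<^esub> y \<in> P \<inter> ?N"
        using xy carr P(1) by (auto simp: kernel_def subgroup.m_closed subgroup.m_inv_closed)
      then show "x = y" using PN carr G.inv_equality G.inv_inv by blast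
    qed
    have "comm_group (K\<lparr>carrier := g ` P\<rparr>)"
      using abelian_p_subgroupsD[OF K p subgroup_img_is_subgroup[OF P(1)]] card_image[OF inj] P(2)
      by simp
    then show ?thesis using comm_group_subgroup_inj_hom[OF G.is_group homh P(1) inj] by blast
  qed
qed

lemma AutoGroup_hom_one:
  assumes "group H" "group K" "mu \<in> hom K (AutoGroup H)"
  shows "mu \<one>\<^bsub>K\<^esub> = (\<lambda>x\<in>carrier H. x)"
  using hom_one[OF assms(3,2) group.AutoGroup[OF assms(1)]] by (simp add: AutoGroup_def BijGroup_def)

context
  fixes H :: "('a, 'c) monoid_scheme" and K :: "('b, 'd) monoid_scheme" and mu
  assumes H: "comm_group H" and K: "group K" and mu: "mu \<in> hom K (AutoGroup H)"
    and D: "group (semidirect_product H mu K)"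
begin

interpretation H: comm_group H by (fact H)
interpretation K: group K by (fact K)

lemma group_hom_semidirect_product_snd: "group_hom (semidirect_product H mu K) K snd"
  using D K by (auto simp: group_hom_def group_hom_axioms_def hom_def semidirect_product_def)

lemma group_hom_semidirect_product_embed:
  "group_hom H (semidirect_product H mu K) (\<lambda>h. (h, \<one>\<^bsub>K\<^esub>))"
  using D H.is_group AutoGroup_hom_one[OF H.is_group K mu]
  by (auto simp: group_hom_def group_hom_axioms_def hom_def semidirect_product_def)

lemma kernel_semidirect_product_snd:
  "kernel (semidirect_product H mu K) K snd = (\<lambda>h. (h, \<one>\<^bsub>K\<^esub>)) ` carrier H"
  by (auto simp: kernel_def semidirect_product_def)

lemma semidirect_product_snd_surj: "snd ` carrier (semidirect_product H mu K) = carrier K"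
  using H.one_closed by (force simp: semidirect_product_def)

lemma solvable_semidirect_product:
  assumes "solvable K"
  shows "solvable (semidirect_product H mu K)"
  using solvable_condition[OF group_hom_semidirect_product_embed group_hom_semidirect_product_snd
      semidirect_product_snd_surj _ H.solvable assms]
  by (simp add: kernel_semidirect_product_snd)

lemma abelian_p_subgroups_semidirect_product:
  assumes "coprime (order H) (order K)" "abelian_p_subgroups K"
  shows "abelian_p_subgroups (semidirect_product H mu K)"
proof (rule abelian_p_subgroups_coprime_extension[OF group_hom_semidirect_product_snd
      semidirect_product_snd_surj _ _ assms(2)])
  show "comm_group ((semidirect_product H mu K)\<lparr>carrier := kernel (semidirect_product H mu K) K snd\<rparr>)"
    using AutoGroup_hom_one[OF H.is_group K mu]
    by (intro comm_group_subgroupI[OF D group_hom.subgroup_kernel[OF group_hom_semidirect_product_snd]])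
      (clarsimp simp: kernel_semidirect_product_snd, simp add: semidirect_product_def H.m_comm)
  have "card (kernel (semidirect_product H mu K) K snd) = order H"
    unfolding kernel_semidirect_product_snd order_def by (rule card_image) (auto intro: inj_onI)
  then show "coprime (card (kernel (semidirect_product H mu K) K snd)) (order K)"
    using assms(1) by simp
qed

end

text \<open>Isabelle's \<open>hom\<close> and \<open>iso\<close> ignore the unit, so the rules of
  \<open>Aprime_nat\<close> only determine carrier and multiplication; the invariant proved by
  induction therefore concerns every choice of unit that turns the structure into a group.\<close>

definition solvable_abelian_p_any_unit :: "('a, 'b) monoid_scheme \<Rightarrow> bool" where
  "solvable_abelian_p_any_unit S \<longleftrightarrow> finite (carrier S) \<and> (\<forall>e. group (S\<lparr>one := e\<rparr>) \<longrightarrow>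
      solvable (S\<lparr>one := e\<rparr>) \<and> abelian_p_subgroups (S\<lparr>one := e\<rparr>))"

lemma group_update_one_eq:
  assumes "group G" "group (G\<lparr>one := e\<rparr>)"
  shows "e = \<one>\<^bsub>G\<^esub>"
  using monoid.one_unique[OF group.is_monoid[OF assms(1)], of e]
    monoid.one_closed[OF group.is_monoid[OF assms(2)]] monoid.l_one[OF group.is_monoid[OF assms(2)]]
  by simp

lemma solvable_abelian_p_any_unitD:
  assumes "solvable_abelian_p_any_unit S" "group (S\<lparr>one := e\<rparr>)"
  shows "solvable (S\<lparr>one := e\<rparr>)" "abelian_p_subgroups (S\<lparr>one := e\<rparr>)"
  using assms unfolding solvable_abelian_p_any_unit_def by blast+

lemma solvable_abelian_p_any_unit_iso:
  assumes "solvable_abelian_p_any_unit B" "A \<cong> B"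
  shows "solvable_abelian_p_any_unit A"
  unfolding solvable_abelian_p_any_unit_def
proof (intro conjI allI impI)
  show "finite (carrier A)"
    using assms iso_finite unfolding solvable_abelian_p_any_unit_def by blast
  fix e assume gA: "group (A\<lparr>one := e\<rparr>)"
  obtain \<phi> where "\<phi> \<in> iso A B" using assms(2) by (auto simp: is_iso_def)
  then have \<phi>: "\<phi> \<in> iso (A\<lparr>one := e\<rparr>) (B\<lparr>one := \<phi> e\<rparr>)" by (simp add: iso_def hom_def)
  have gB: "group (B\<lparr>one := \<phi> e\<rparr>)" using group.iso_imp_img_group[OF gA \<phi>] by simp
  have hom: "group_hom (A\<lparr>one := e\<rparr>) (B\<lparr>one := \<phi> e\<rparr>) \<phi>"
    using gA gB \<phi> by (simp add: group_hom_def group_hom_axioms_def iso_def)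
  have inj: "inj_on \<phi> (carrier (A\<lparr>one := e\<rparr>))" using \<phi> by (simp add: iso_def bij_betw_def)
  show "solvable (A\<lparr>one := e\<rparr>)"
    using group_hom.inj_hom_imp_solvable[OF hom inj solvable_abelian_p_any_unitD(1)[OF assms(1) gB]] .
  show "abelian_p_subgroups (A\<lparr>one := e\<rparr>)"
    using abelian_p_subgroups_inj_hom[OF hom inj solvable_abelian_p_any_unitD(2)[OF assms(1) gB]] .
qed

lemma solvable_abelian_p_any_unit_comm_group:
  assumes "comm_group G" "finite (carrier G)"
  shows "solvable_abelian_p_any_unit G"
  unfolding solvable_abelian_p_any_unit_def
proof (intro conjI allI impI)
  fix e assume "group (G\<lparr>one := e\<rparr>)"
  then have "e = \<one>\<^bsub>G\<^esub>" by (rule group_update_one_eq[OF comm_group.axioms(2)[OF assms(1)]])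
  then have "G\<lparr>one := e\<rparr> = G" by simp
  then show "solvable (G\<lparr>one := e\<rparr>)" "abelian_p_subgroups (G\<lparr>one := e\<rparr>)"
    using comm_group.solvable[OF assms(1)] comm_group.abelian_p_subgroups[OF assms(1)] by simp_all
qed (fact assms(2))

lemma group_DirProdD:
  assumes "group (A \<times>\<times> B)"
  shows "group A" "group B"
proof -
  have "(\<one>\<^bsub>A\<^esub>, \<one>\<^bsub>B\<^esub>) \<in> carrier A \<times> carrier B"
    using monoid.one_closed[OF group.is_monoid[OF assms]] by simp
  then have "fst ` carrier (A \<times>\<times> B) = carrier A" "snd ` carrier (A \<times>\<times> B) = carrier B" by force+
  moreover have "fst \<in> hom (A \<times>\<times> B) A" "snd \<in> hom (A \<times>\<times> B) B" by (auto simp: hom_def mult_DirProd')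
  ultimately show "group A" "group B"
    using group.hom_imp_img_group[OF assms, of fst A] group.hom_imp_img_group[OF assms, of snd B]
    by simp_all
qed

lemma solvable_abelian_p_any_unit_DirProd:
  assumes "solvable_abelian_p_any_unit G1" "solvable_abelian_p_any_unit G2"
  shows "solvable_abelian_p_any_unit (G1 \<times>\<times> G2)"
  unfolding solvable_abelian_p_any_unit_def
proof (intro conjI allI impI)
  show "finite (carrier (G1 \<times>\<times> G2))"
    using assms unfolding solvable_abelian_p_any_unit_def by simp
  fix e
  have eq: "(G1 \<times>\<times> G2)\<lparr>one := e\<rparr> = G1\<lparr>one := fst e\<rparr> \<times>\<times> G2\<lparr>one := snd e\<rparr>"
    by (simp add: DirProd_def)
  assume "group ((G1 \<times>\<times> G2)\<lparr>one := e\<rparr>)"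
  then have g1: "group (G1\<lparr>one := fst e\<rparr>)" and g2: "group (G2\<lparr>one := snd e\<rparr>)"
    unfolding eq by (fact group_DirProdD)+
  note h1 = solvable_abelian_p_any_unitD[OF assms(1) g1]
    and h2 = solvable_abelian_p_any_unitD[OF assms(2) g2]
  show "solvable ((G1 \<times>\<times> G2)\<lparr>one := e\<rparr>)"
    unfolding eq by (rule solvable_DirProd[OF g1 g2 h1(1) h2(1)])
  show "abelian_p_subgroups ((G1 \<times>\<times> G2)\<lparr>one := e\<rparr>)"
    unfolding eq by (rule abelian_p_subgroups_DirProd[OF g1 g2 h1(2) h2(2)])
qed

lemma solvable_abelian_p_any_unit_semidirect_product:
  assumes K: "solvable_abelian_p_any_unit K" and H: "comm_group H" "finite (carrier H)"
    and cop: "coprime (order H) (order K)" and mu: "mu \<in> hom K (AutoGroup H)"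
  shows "solvable_abelian_p_any_unit (semidirect_product H mu K)"
  unfolding solvable_abelian_p_any_unit_def
proof (intro conjI allI impI)
  interpret H: comm_group H by fact
  show "finite (carrier (semidirect_product H mu K))"
    using K H(2) by (simp add: solvable_abelian_p_any_unit_def semidirect_product_def)
  fix e assume gD: "group ((semidirect_product H mu K)\<lparr>one := e\<rparr>)"
  let ?K = "K\<lparr>one := snd e\<rparr>"
  have e: "e \<in> carrier H \<times> carrier K"
    using monoid.one_closed[OF group.is_monoid[OF gD]] by (simp add: semidirect_product_def)
  have "snd \<in> hom ((semidirect_product H mu K)\<lparr>one := e\<rparr>) K"
    by (auto simp: hom_def semidirect_product_def)
  then have "group (K\<lparr>carrier := snd ` carrier ((semidirect_product H mu K)\<lparr>one := e\<rparr>),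
      one := snd \<one>\<^bsub>(semidirect_product H mu K)\<lparr>one := e\<rparr>\<^esub>\<rparr>)"
    by (rule group.hom_imp_img_group[OF gD])
  moreover have "snd ` carrier ((semidirect_product H mu K)\<lparr>one := e\<rparr>) = carrier K"
    using e by (force simp: semidirect_product_def)
  ultimately have gK: "group ?K" by simp
  have mu': "mu \<in> hom ?K (AutoGroup H)" using mu by (simp add: hom_def)
  have fst_e: "fst e \<in> carrier H" using e by auto
  have "mu (snd e) = (\<lambda>x\<in>carrier H. x)" using AutoGroup_hom_one[OF H.is_group gK mu'] by simp
  then have "fst e \<otimes>\<^bsub>H\<^esub> fst e = fst e"
    using monoid.l_one[OF group.is_monoid[OF gD], of e] e fst_e
    by (simp add: semidirect_product_def prod_eq_iff)
  then have "fst e = \<one>\<^bsub>H\<^esub>" using fst_e by simp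
  then have D: "(semidirect_product H mu K)\<lparr>one := e\<rparr> = semidirect_product H mu ?K"
    by (cases e) (simp add: semidirect_product_def)
  note sK = solvable_abelian_p_any_unitD[OF K gK]
  have "coprime (order H) (order ?K)" using cop by (simp add: order_def)
  then show "abelian_p_subgroups ((semidirect_product H mu K)\<lparr>one := e\<rparr>)"
    unfolding D by (rule abelian_p_subgroups_semidirect_product[OF H(1) gK mu' gD[unfolded D] _ sK(2)])
  show "solvable ((semidirect_product H mu K)\<lparr>one := e\<rparr>)"
    unfolding D by (rule solvable_semidirect_product[OF H(1) gK mu' gD[unfolded D] sK(1)])
qed

lemma Aprime_nat_solvable_abelian_p_any_unit:
  "Aprime_nat S \<Longrightarrow> solvable_abelian_p_any_unit S"
proof (induction rule: Aprime_nat.induct)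
  case (abelian G)
  then show ?case by (rule solvable_abelian_p_any_unit_comm_group)
next
  case (semidirect K H mu S)
  then show ?case
    using solvable_abelian_p_any_unit_iso solvable_abelian_p_any_unit_semidirect_product by blast
next
  case (product G1 G2 S)
  then show ?case
    using solvable_abelian_p_any_unit_iso solvable_abelian_p_any_unit_DirProd by blast
qed

theorem mainTheorem4:
  fixes G :: "('a, 'b) monoid_scheme"
  assumes "Aprime_group G"
  shows "solvable G \<and> A_group G"
proof -
  obtain S where G: "group G" and S: "Aprime_nat S" "G \<cong> S"
    using assms unfolding Aprime_group_def by blast
  have inv: "solvable_abelian_p_any_unit G"
    using solvable_abelian_p_any_unit_iso[OF Aprime_nat_solvable_abelian_p_any_unit[OF S(1)] S(2)] .
  then have fin: "finite (carrier G)" unfolding solvable_abelian_p_any_unit_def by blast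
  have "G\<lparr>one := \<one>\<^bsub>G\<^esub>\<rparr> = G" by simp
  then have sol: "solvable G" and abp: "abelian_p_subgroups G"
    using solvable_abelian_p_any_unitD[OF inv, of "\<one>\<^bsub>G\<^esub>"] G by simp_all
  have "comm_group (G\<lparr>carrier := P\<rparr>)" if "sylow_subgroup G p P" for p P
    using abelian_p_subgroupsD[OF abp] that unfolding sylow_subgroup_def by blast
  then show ?thesis
    unfolding A_group_def using G fin sol by blast
qed

end
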